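(* Let $(V,Y,\mathbf 1,\omega)$ be a vertex operator algebra, $g$ an automorphism of $V$ of finite order $T$, and $n,m\in(1/T)\mathbb N$. Then $g$ is an automorphism of the vertex algebra $\exp(V,\omega)$, and $A_{g,n}(V,\omega)=\tilde A_{g,n}(\exp(V,\omega))$ and $A_{g,n,m}(V,\omega)=\tilde A_{g,n,m}(\exp(V,\omega))$ (equal subspaces $O_{g,n}(V)=\tilde O_{g,n}(\exp(V,\omega))$, $O_{g,n,m}(V)=\tilde O_{g,n,m}(\exp(V,\omega))$ and equal products).
   Context: A vertex operator algebra $(V,Y,\mathbf 1,\omega)$ is a vertex algebra with $V=\bigoplus_{n\in\mathbb Z}V_n$, $\dim V_n<\infty$, $V_n=0$ for $n\ll0$, $\omega\in V_2$, $L(m)=\omega_{m+1}$ satisfying the Virasoro relations with central charge $c$, $L(0)|_{V_n}=n$, $Y(L(-1)w,z)=\frac d{dz}Y(w,z)$; $\mathrm{wt}\,u=n$ for $u\in V_n$. An automorphism $g$ is a vertex algebra automorphism with $g\omega=\omega$; $V^r=\{v:gv=e^{-2\pi\sqrt{-1}r/T}v\}$. $\exp(V,\omega)$ is the vertex algebra on $V$ with vacuum $\mathbf 1$ and vertex operator $Y[u,z]=Y(e^{zL(0)}u,e^z-1)$ (its $\mathcal D$-operator is $L(-1)+L(0)$). For $k,l\in\{0,\dots,T-1\}$, $\delta_k(l)=1$ if $k\ge l$, $0$ if $k<l$, $\delta_k(T)=0$; $n=\lfloor n\rfloor+\bar n/T$. VOA side: for homogeneous $u\in V^r$, $v\in V$,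 $m,n,p\in(1/T)\mathbb N$ with $\bar p-\bar n\equiv r$: $u*_{g,m,p}^{\,n}v=\sum_{i=0}^{\lfloor p\rfloor}(-1)^i\binom{\lfloor m\rfloor+\lfloor n\rfloor-\lfloor p\rfloor-1+\delta_{\bar m}(r)+\delta_{\bar n}(T-r)+i}{i}\operatorname{Res}_z\frac{(1+z)^{\mathrm{wt}u-1+\lfloor m\rfloor+\delta_{\bar m}(r)+r/T}}{z^{\lfloor m\rfloor+\lfloor n\rfloor-\lfloor p\rfloor+\delta_{\bar m}(r)+\delta_{\bar n}(T-r)+i}}Y(u,z)v$, else $0$; $u\circ_{g,m}^{\,n}v=\operatorname{Res}_z\frac{(1+z)^{\mathrm{wt}u-1+\lfloor m\rfloor+\delta_{\bar m}(r)+r/T}}{z^{\lfloor m\rfloor+\lfloor n\rfloor+\delta_{\bar m}(r)+\delta_{\bar n}(T-r)+1}}Y(u,z)v$; $O'_{g,n,m}(V)=\mathrm{span}\{u\circ_{g,m}^{\,n}v\}+\mathrm{span}\{(L(-1)+L(0)+m-n)u\}$; $O''_{g,n,m}$, $O'''_{g,n,m}$, $O_{g,n,m}=O'+O''+O'''$ are defined as below with $*$ in place of $\bullet$ and $O'$ in place of $\tilde O'$; $O_{g,n}=O'_{g,n,n}$, $A_{g,n}(V,\omega)=V/O_{g,n}(V)$ with product $*_{g,n,n}^{\,n}$, $A_{g,n,m}(V,\omega)=V/O_{g,n,m}(V)$ with left action $*_{g,m,n}^{\,n}$ and right action $*_{g,m,m}^{\,n}$. Vertex algebra side (for a vertex algebra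 $(V',Y',\mathbf 1)$ with $\mathcal D'v=v_{-2}\mathbf 1$ and automorphism $g$): for $u\in V'^r$, $\bar p-\bar n\equiv r$: $u\bullet_{g,m,p}^{\,n}v=\sum_{i=0}^{\lfloor p\rfloor}(-1)^i\binom{\lfloor m\rfloor+\lfloor n\rfloor-\lfloor p\rfloor-1+\delta_{\bar m}(r)+\delta_{\bar n}(T-r)+i}{i}\operatorname{Res}_x\frac{e^{x(\lfloor m\rfloor+\delta_{\bar m}(r)+r/T)}}{(e^x-1)^{\lfloor m\rfloor+\lfloor n\rfloor-\lfloor p\rfloor+\delta_{\bar m}(r)+\delta_{\bar n}(T-r)+i}}Y'(u,x)v$, else $0$; $u\diamond_{g,m}^{\,n}v=\operatorname{Res}_x\frac{e^{x(\delta_{\bar m}(r)+\lfloor m\rfloor+r/T)}}{(e^x-1)^{\lfloor m\rfloor+\lfloor n\rfloor+\delta_{\bar m}(r)+\delta_{\bar n}(T-r)+1}}Y'(u,x)v$; $\tilde O'_{g,n,m}=\mathrm{span}\{u\diamond_{g,m}^{\,n}v\}+\mathrm{span}\{(\mathcal D'+m-n)u\}$; $\tilde O''_{g,n,m}$ is the span of all $u\bullet_{g,m,p_3}^{\,n}\big((a\bullet_{g,p_1,p_2}^{\,p_3}b)\bullet_{g,m,p_1}^{\,p_3}c-a\bullet_{g,m,p_2}^{\,p_3}(b\bullet_{g,m,p_1}^{\,p_2}c)\big)$; $\tilde O'''_{g,n,m}=\sum_{p_1,p_2}(V'\bullet_{g,p_1,p_2}^{\,n}\tilde O'_{g,p_2,p_1})\bullet_{g,m,p_1}^{\,n}V'$;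 $\tilde O_{g,n,m}=\tilde O'+\tilde O''+\tilde O'''$; $\tilde O_{g,n}=\tilde O'_{g,n,n}$; $\tilde A_{g,n}(V')=V'/\tilde O_{g,n}$ with product $\bullet_{g,n,n}^{\,n}$; $\tilde A_{g,n,m}(V')=V'/\tilde O_{g,n,m}$ with left action $\bullet_{g,m,n}^{\,n}$ and right action $\bullet_{g,m,m}^{\,n}$. *)

theory Defs
  imports Complex_Main "HOL-Computational_Algebra.Formal_Laurent_Series"
begin

definition fsum :: "('i \<Rightarrow> 'v::ab_group_add) \<Rightarrow> 'v" where
  "fsum f = sum f {i. f i \<noteq> 0}"

text \<open>The underlying space is a type 'v with complex scalar multiplication sc.
  Y u n v denotes the mode u_n v, i.e. Y(u,z)v = sum_n u_n v z^(-n-1).\<close>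

definition vertex_algebra ::
  "(complex \<Rightarrow> 'v::ab_group_add \<Rightarrow> 'v) \<Rightarrow> ('v \<Rightarrow> int \<Rightarrow> 'v \<Rightarrow> 'v) \<Rightarrow> 'v \<Rightarrow> bool" where
  "vertex_algebra sc Y vac \<longleftrightarrow>
     vector_space sc \<and>
     (\<forall>u n. Vector_Spaces.linear sc sc (Y u n)) \<and>
     (\<forall>n v. Vector_Spaces.linear sc sc (\<lambda>u. Y u n v)) \<and>
     (\<forall>u v. \<exists>N. \<forall>n\<ge>N. Y u n v = 0) \<and>
     (\<forall>n v. Y vac n v = (if n = -1 then v else 0)) \<and>
     (\<forall>u. Y u (-1) vac = u \<and> (\<forall>n\<ge>0. Y u n vac = 0)) \<and>
     (\<forall>u v w l m n.
        fsum (\<lambda>i::nat. sc ((of_int m :: complex) gchoose i) (Y (Y u (l + int i) v) (m + n - int i) w))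
      = fsum (\<lambda>i::nat. sc ((-1) ^ i * ((of_int l :: complex) gchoose i))
            (Y u (l + m - int i) (Y v (n + int i) w)
             - sc ((-1) powi l) (Y v (l + n - int i) (Y u (m + int i) w)))))"

definition va_aut ::
  "(complex \<Rightarrow> 'v::ab_group_add \<Rightarrow> 'v) \<Rightarrow> ('v \<Rightarrow> int \<Rightarrow> 'v \<Rightarrow> 'v) \<Rightarrow> 'v \<Rightarrow> ('v \<Rightarrow> 'v) \<Rightarrow> bool" where
  "va_aut sc Y vac g \<longleftrightarrow> bij g \<and> Vector_Spaces.linear sc sc g \<and> g vac = vac \<and>
     (\<forall>u n v. g (Y u n v) = Y (g u) n (g v))"

definition finite_order :: "('v \<Rightarrow> 'v) \<Rightarrow> nat \<Rightarrow> bool" where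
  "finite_order g T \<longleftrightarrow> T > 0 \<and> g ^^ T = id \<and> (\<forall>k. 0 < k \<and> k < T \<longrightarrow> g ^^ k \<noteq> id)"

definition Lop :: "('v \<Rightarrow> int \<Rightarrow> 'v \<Rightarrow> 'v) \<Rightarrow> 'v \<Rightarrow> int \<Rightarrow> 'v \<Rightarrow> 'v" where
  "Lop Y om m = Y om (m + 1)"

definition wtspace :: "(complex \<Rightarrow> 'v::ab_group_add \<Rightarrow> 'v) \<Rightarrow> ('v \<Rightarrow> int \<Rightarrow> 'v \<Rightarrow> 'v) \<Rightarrow> 'v \<Rightarrow> int \<Rightarrow> 'v set" where
  "wtspace sc Y om k = {v. Lop Y om 0 v = sc (of_int k) v}"

definition VOA ::
  "(complex \<Rightarrow> 'v::ab_group_add \<Rightarrow> 'v) \<Rightarrow> ('v \<Rightarrow> int \<Rightarrow> 'v \<Rightarrow> 'v) \<Rightarrow> 'v \<Rightarrow> 'v \<Rightarrow> complex \<Rightarrow> bool" where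
  "VOA sc Y vac om c \<longleftrightarrow>
     vertex_algebra sc Y vac \<and>
     (\<forall>v. \<exists>S. finite S \<and> v \<in> module.span sc (\<Union>k\<in>S. wtspace sc Y om k)) \<and>
     (\<forall>k. \<exists>B. finite B \<and> wtspace sc Y om k \<subseteq> module.span sc B) \<and>
     (\<exists>N. \<forall>k<N. wtspace sc Y om k = {0}) \<and>
     om \<in> wtspace sc Y om 2 \<and>
     (\<forall>m n v. Lop Y om m (Lop Y om n v) - Lop Y om n (Lop Y om m v)
        = sc (of_int (m - n)) (Lop Y om (m + n) v)
          + (if m + n = 0 then sc ((of_int m ^ 3 - of_int m) / 12 * c) v else 0)) \<and>
     (\<forall>u n v. Y (Lop Y om (-1) u) n v = sc (- of_int n) (Y u (n - 1) v))"

definition voa_aut ::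
  "(complex \<Rightarrow> 'v::ab_group_add \<Rightarrow> 'v) \<Rightarrow> ('v \<Rightarrow> int \<Rightarrow> 'v \<Rightarrow> 'v) \<Rightarrow> 'v \<Rightarrow> 'v \<Rightarrow> ('v \<Rightarrow> 'v) \<Rightarrow> bool" where
  "voa_aut sc Y vac om g \<longleftrightarrow> va_aut sc Y vac g \<and> g om = om"

definition wtproj :: "(complex \<Rightarrow> 'v::ab_group_add \<Rightarrow> 'v) \<Rightarrow> ('v \<Rightarrow> int \<Rightarrow> 'v \<Rightarrow> 'v) \<Rightarrow> 'v \<Rightarrow> int \<Rightarrow> 'v \<Rightarrow> 'v" where
  "wtproj sc Y om k v = (THE w. w \<in> wtspace sc Y om k \<and>
      v - w \<in> module.span sc (\<Union>j\<in>-{k}. wtspace sc Y om j))"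

definition wts :: "(complex \<Rightarrow> 'v::ab_group_add \<Rightarrow> 'v) \<Rightarrow> ('v \<Rightarrow> int \<Rightarrow> 'v \<Rightarrow> 'v) \<Rightarrow> 'v \<Rightarrow> 'v \<Rightarrow> int set" where
  "wts sc Y om v = {k. wtproj sc Y om k v \<noteq> 0}"

text \<open>Component of v in V^r = {v. g v = e^(-2 pi i r/T) v}, 0 <= r < T.\<close>
definition gproj :: "(complex \<Rightarrow> 'v::ab_group_add \<Rightarrow> 'v) \<Rightarrow> ('v \<Rightarrow> 'v) \<Rightarrow> nat \<Rightarrow> nat \<Rightarrow> 'v \<Rightarrow> 'v" where
  "gproj sc g T r v = sc (1 / of_nat T)
     (\<Sum>j<T. sc (exp (2 * pi * \<i> * of_nat j * of_nat r / of_nat T)) ((g ^^ j) v))"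

text \<open>An element n of (1/T)N is encoded by the natural number N = T n; then
  floor n = N div T and bar n = N mod T.\<close>

definition dlt :: "nat \<Rightarrow> nat \<Rightarrow> nat \<Rightarrow> int" where
  "dlt T k l = (if l = T then 0 else if k \<ge> l then 1 else 0)"

definition admissible :: "nat \<Rightarrow> nat \<Rightarrow> nat \<Rightarrow> nat \<Rightarrow> bool" where
  "admissible T r p n \<longleftrightarrow> (int (p mod T) - int (n mod T) - int r) mod int T = 0"

text \<open>Res_z (1+z)^alpha z^(-K) Y(u,z) v\<close>
definition resz :: "(complex \<Rightarrow> 'v::ab_group_add \<Rightarrow> 'v) \<Rightarrow> ('v \<Rightarrow> int \<Rightarrow> 'v \<Rightarrow> 'v) \<Rightarrow> complex \<Rightarrow> int \<Rightarrow> 'v \<Rightarrow> 'v \<Rightarrow> 'v" where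
  "resz sc Y alpha K u v = fsum (\<lambda>j::nat. sc (alpha gchoose j) (Y u (int j - K) v))"

text \<open>u *_{g,m,p}^n v for u homogeneous of weight k in V^r.\<close>
definition vstarH :: "(complex \<Rightarrow> 'v::ab_group_add \<Rightarrow> 'v) \<Rightarrow> ('v \<Rightarrow> int \<Rightarrow> 'v \<Rightarrow> 'v) \<Rightarrow> nat \<Rightarrow>
     int \<Rightarrow> nat \<Rightarrow> nat \<Rightarrow> nat \<Rightarrow> nat \<Rightarrow> 'v \<Rightarrow> 'v \<Rightarrow> 'v" where
  "vstarH sc Y T k r m p n u v =
    (if admissible T r p n then
      (let A = int (m div T) + int (n div T) - int (p div T) - 1 + dlt T (m mod T) r + dlt T (n mod T) (T - r);
           alpha = of_int (k - 1 + int (m div T) + dlt T (m mod T) r) + of_nat r / of_nat T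
       in \<Sum>i\<le>p div T. sc ((-1) ^ i * ((of_int (A + int i) :: complex) gchoose i))
             (resz sc Y alpha (A + 1 + int i) u v))
     else 0)"

definition vcircH :: "(complex \<Rightarrow> 'v::ab_group_add \<Rightarrow> 'v) \<Rightarrow> ('v \<Rightarrow> int \<Rightarrow> 'v \<Rightarrow> 'v) \<Rightarrow> nat \<Rightarrow>
     int \<Rightarrow> nat \<Rightarrow> nat \<Rightarrow> nat \<Rightarrow> 'v \<Rightarrow> 'v \<Rightarrow> 'v" where
  "vcircH sc Y T k r m n u v =
    resz sc Y (of_int (k - 1 + int (m div T) + dlt T (m mod T) r) + of_nat r / of_nat T)
      (int (m div T) + int (n div T) + dlt T (m mod T) r + dlt T (n mod T) (T - r) + 1) u v"

definition vstar :: "(complex \<Rightarrow> 'v::ab_group_add \<Rightarrow> 'v) \<Rightarrow> ('v \<Rightarrow> int \<Rightarrow> 'v \<Rightarrow> 'v) \<Rightarrow> 'v \<Rightarrow> ('v \<Rightarrow> 'v) \<Rightarrow> nat \<Rightarrow>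
     nat \<Rightarrow> nat \<Rightarrow> nat \<Rightarrow> 'v \<Rightarrow> 'v \<Rightarrow> 'v" where
  "vstar sc Y om g T m p n u v =
     (\<Sum>k\<in>wts sc Y om u. \<Sum>r<T. vstarH sc Y T k r m p n (gproj sc g T r (wtproj sc Y om k u)) v)"

definition vcirc :: "(complex \<Rightarrow> 'v::ab_group_add \<Rightarrow> 'v) \<Rightarrow> ('v \<Rightarrow> int \<Rightarrow> 'v \<Rightarrow> 'v) \<Rightarrow> 'v \<Rightarrow> ('v \<Rightarrow> 'v) \<Rightarrow> nat \<Rightarrow>
     nat \<Rightarrow> nat \<Rightarrow> 'v \<Rightarrow> 'v \<Rightarrow> 'v" where
  "vcirc sc Y om g T m n u v =
     (\<Sum>k\<in>wts sc Y om u. \<Sum>r<T. vcircH sc Y T k r m n (gproj sc g T r (wtproj sc Y om k u)) v)"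

definition O1V :: "(complex \<Rightarrow> 'v::ab_group_add \<Rightarrow> 'v) \<Rightarrow> ('v \<Rightarrow> int \<Rightarrow> 'v \<Rightarrow> 'v) \<Rightarrow> 'v \<Rightarrow> ('v \<Rightarrow> 'v) \<Rightarrow> nat \<Rightarrow>
     nat \<Rightarrow> nat \<Rightarrow> 'v set" where
  "O1V sc Y om g T n m = module.span sc
     ({vcirc sc Y om g T m n u v | u v. True} \<union>
      {Lop Y om (-1) u + Lop Y om 0 u + sc ((of_nat m - of_nat n) / of_nat T) u | u. True})"

text \<open>star m p n u v stands for u *_{g,m,p}^n v; O1 n m stands for O'_{g,n,m}.\<close>
definition O2 :: "(complex \<Rightarrow> 'v::ab_group_add \<Rightarrow> 'v) \<Rightarrow> (nat \<Rightarrow> nat \<Rightarrow> nat \<Rightarrow> 'v \<Rightarrow> 'v \<Rightarrow> 'v) \<Rightarrow>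
     nat \<Rightarrow> nat \<Rightarrow> 'v set" where
  "O2 sc star n m = module.span sc
     {star m p3 n u (star m p1 p3 (star p1 p2 p3 a b) c - star m p2 p3 a (star m p1 p2 b c))
      | u a b c p1 p2 p3. True}"

definition O3 :: "(complex \<Rightarrow> 'v::ab_group_add \<Rightarrow> 'v) \<Rightarrow> (nat \<Rightarrow> nat \<Rightarrow> nat \<Rightarrow> 'v \<Rightarrow> 'v \<Rightarrow> 'v) \<Rightarrow>
     (nat \<Rightarrow> nat \<Rightarrow> 'v set) \<Rightarrow> nat \<Rightarrow> nat \<Rightarrow> 'v set" where
  "O3 sc star O1 n m = module.span sc
     {star m p1 n (star p1 p2 n u x) w | u x w p1 p2. x \<in> O1 p2 p1}"

definition Ofull :: "(complex \<Rightarrow> 'v::ab_group_add \<Rightarrow> 'v) \<Rightarrow> (nat \<Rightarrow> nat \<Rightarrow> nat \<Rightarrow> 'v \<Rightarrow> 'v \<Rightarrow> 'v) \<Rightarrow>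
     (nat \<Rightarrow> nat \<Rightarrow> 'v set) \<Rightarrow> nat \<Rightarrow> nat \<Rightarrow> 'v set" where
  "Ofull sc star O1 n m = module.span sc (O1 n m \<union> O2 sc star n m \<union> O3 sc star O1 n m)"

definition resx :: "(complex \<Rightarrow> 'v::ab_group_add \<Rightarrow> 'v) \<Rightarrow> ('v \<Rightarrow> int \<Rightarrow> 'v \<Rightarrow> 'v) \<Rightarrow> complex fls \<Rightarrow> 'v \<Rightarrow> 'v \<Rightarrow> 'v" where
  "resx sc Y F u v = fsum (\<lambda>j::int. sc (fls_nth F j) (Y u j v))"

definition expfrac :: "complex \<Rightarrow> int \<Rightarrow> complex fls" where
  "expfrac beta K = fps_to_fls (fps_exp beta) * (fps_to_fls (fps_exp 1 - 1)) powi (- K)"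

definition bulletH :: "(complex \<Rightarrow> 'v::ab_group_add \<Rightarrow> 'v) \<Rightarrow> ('v \<Rightarrow> int \<Rightarrow> 'v \<Rightarrow> 'v) \<Rightarrow> nat \<Rightarrow>
     nat \<Rightarrow> nat \<Rightarrow> nat \<Rightarrow> nat \<Rightarrow> 'v \<Rightarrow> 'v \<Rightarrow> 'v" where
  "bulletH sc Y T r m p n u v =
    (if admissible T r p n then
      (let A = int (m div T) + int (n div T) - int (p div T) - 1 + dlt T (m mod T) r + dlt T (n mod T) (T - r);
           beta = of_int (int (m div T) + dlt T (m mod T) r) + of_nat r / of_nat T
       in \<Sum>i\<le>p div T. sc ((-1) ^ i * ((of_int (A + int i) :: complex) gchoose i))
             (resx sc Y (expfrac beta (A + 1 + int i)) u v))
     else 0)"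

definition diamondH :: "(complex \<Rightarrow> 'v::ab_group_add \<Rightarrow> 'v) \<Rightarrow> ('v \<Rightarrow> int \<Rightarrow> 'v \<Rightarrow> 'v) \<Rightarrow> nat \<Rightarrow>
     nat \<Rightarrow> nat \<Rightarrow> nat \<Rightarrow> 'v \<Rightarrow> 'v \<Rightarrow> 'v" where
  "diamondH sc Y T r m n u v =
    resx sc Y (expfrac (of_int (dlt T (m mod T) r + int (m div T)) + of_nat r / of_nat T)
      (int (m div T) + int (n div T) + dlt T (m mod T) r + dlt T (n mod T) (T - r) + 1)) u v"

definition bullet :: "(complex \<Rightarrow> 'v::ab_group_add \<Rightarrow> 'v) \<Rightarrow> ('v \<Rightarrow> int \<Rightarrow> 'v \<Rightarrow> 'v) \<Rightarrow> ('v \<Rightarrow> 'v) \<Rightarrow> nat \<Rightarrow>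
     nat \<Rightarrow> nat \<Rightarrow> nat \<Rightarrow> 'v \<Rightarrow> 'v \<Rightarrow> 'v" where
  "bullet sc Y g T m p n u v = (\<Sum>r<T. bulletH sc Y T r m p n (gproj sc g T r u) v)"

definition diamond :: "(complex \<Rightarrow> 'v::ab_group_add \<Rightarrow> 'v) \<Rightarrow> ('v \<Rightarrow> int \<Rightarrow> 'v \<Rightarrow> 'v) \<Rightarrow> ('v \<Rightarrow> 'v) \<Rightarrow> nat \<Rightarrow>
     nat \<Rightarrow> nat \<Rightarrow> 'v \<Rightarrow> 'v \<Rightarrow> 'v" where
  "diamond sc Y g T m n u v = (\<Sum>r<T. diamondH sc Y T r m n (gproj sc g T r u) v)"

text \<open>tilde O'_{g,n,m}(V'), with D' v = v_{-2} 1.\<close>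
definition O1A :: "(complex \<Rightarrow> 'v::ab_group_add \<Rightarrow> 'v) \<Rightarrow> ('v \<Rightarrow> int \<Rightarrow> 'v \<Rightarrow> 'v) \<Rightarrow> 'v \<Rightarrow> ('v \<Rightarrow> 'v) \<Rightarrow> nat \<Rightarrow>
     nat \<Rightarrow> nat \<Rightarrow> 'v set" where
  "O1A sc Y vac g T n m = module.span sc
     ({diamond sc Y g T m n u v | u v. True} \<union>
      {Y u (-2) vac + sc ((of_nat m - of_nat n) / of_nat T) u | u. True})"

text \<open>Modes of Y[u,z] = Y(e^(z L(0)) u, e^z - 1): u[n] = Res_z z^n Y[u,z].\<close>
definition expY :: "(complex \<Rightarrow> 'v::ab_group_add \<Rightarrow> 'v) \<Rightarrow> ('v \<Rightarrow> int \<Rightarrow> 'v \<Rightarrow> 'v) \<Rightarrow> 'v \<Rightarrow>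
     'v \<Rightarrow> int \<Rightarrow> 'v \<Rightarrow> 'v" where
  "expY sc Y om u n v =
     (\<Sum>k\<in>wts sc Y om u. fsum (\<lambda>j::int.
        sc (fls_nth (expfrac (of_int k) (j + 1)) (- n - 1)) (Y (wtproj sc Y om k u) j v)))"

end

theory Submission
  imports Defs
begin

text \<open>For \<open>x\<close> of \<open>L(0)\<close>-weight \<open>k\<close> the vertex operator of \<open>exp(V, \<omega>)\<close> is
  \<open>Y[x, w] = e\<^sup>w\<^sup>k Y(x, e\<^sup>w - 1)\<close>, so the substitution \<open>z = e\<^sup>w - 1\<close> turns
  \<open>Res\<^sub>w e\<^sup>b\<^sup>w (e\<^sup>w - 1)\<^sup>-\<^sup>K Y[x, w]\<close> into \<open>Res\<^sub>z (1 + z)^(k - 1 + b) z\<^sup>-\<^sup>K Y(x, z)\<close>.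
  On the level of formal Laurent series this is the residue identity
  \<open>Res\<^sub>w e\<^sup>a\<^sup>w (e\<^sup>w - 1)\<^sup>-\<^sup>N\<^sup>-\<^sup>1 = (a - 1 choose N)\<close>, which follows by induction on \<open>N\<close>
  from the vanishing of the residue of a derivative. Hence, on each weight and \<open>g\<close>-eigenspace
  component, the products \<open>\<bullet>\<close> and \<open>\<diamond>\<close> of \<open>exp(V, \<omega>)\<close> coincide with \<open>*\<close> and \<open>\<circ>\<close> of \<open>V\<close>.
  Moreover \<open>u\<^sub>-\<^sub>2 1\<close> computed in \<open>exp(V, \<omega>)\<close> is \<open>L(-1) u + L(0) u\<close>, so the generators of
  \<open>O'\<close> and \<open>\<tilde>O'\<close> agree, and with them all spaces built from them. Since \<open>g\<close> fixes \<open>\<omega>\<close>, it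
  preserves weights and therefore commutes with the vertex operator of \<open>exp(V, \<omega>)\<close>.\<close>

lemma fsum_eq_sum:
  assumes "finite S" "\<And>i. i \<notin> S \<Longrightarrow> f i = 0"
  shows "fsum f = sum f S"
  unfolding fsum_def by (rule sum.mono_neutral_left) (use assms in auto)

lemma fsum_sum_swap:
  assumes "finite S" "\<And>k. k \<in> S \<Longrightarrow> finite {j. h k j \<noteq> 0}"
  shows "fsum (\<lambda>j. \<Sum>k\<in>S. h k j) = (\<Sum>k\<in>S. fsum (h k))"
proof -
  define J where "J = (\<Union>k\<in>S. {j. h k j \<noteq> 0})"
  have J: "finite J" using assms by (simp add: J_def)
  have zero: "h k j = 0" if "k \<in> S" "j \<notin> J" for k j
    using that by (auto simp: J_def)
  have "fsum (\<lambda>j. \<Sum>k\<in>S. h k j) = (\<Sum>j\<in>J. \<Sum>k\<in>S. h k j)"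
    by (rule fsum_eq_sum[OF J]) (simp add: zero)
  also have "\<dots> = (\<Sum>k\<in>S. \<Sum>j\<in>J. h k j)"
    by (rule sum.swap)
  also have "\<dots> = (\<Sum>k\<in>S. fsum (h k))"
    by (intro sum.cong refl fsum_eq_sum[symmetric, OF J]) (simp add: zero)
  finally show ?thesis .
qed

lemma linear_fsum:
  assumes "Vector_Spaces.linear s1 s2 h" "inj h"
  shows "h (fsum f) = fsum (\<lambda>i. h (f i))"
proof -
  interpret h: Vector_Spaces.linear s1 s2 h by fact
  have "{i. h (f i) \<noteq> 0} = {i. f i \<noteq> 0}"
    using assms(2) by (auto simp: h.inj_iff_eq_0)
  then show ?thesis
    unfolding fsum_def by (cases "finite {i. f i \<noteq> 0}") (simp_all add: h.sum)
qed

section \<open>Residues of exponential series\<close>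

unbundle fps_syntax

lemma fls_times_nth_sum:
  fixes f g :: "'a::comm_ring_1 fls"
  assumes "finite J" "\<And>j. j \<notin> J \<Longrightarrow> f $$ j * g $$ (n - j) = 0"
  shows "(f * g) $$ n = (\<Sum>j\<in>J. f $$ j * g $$ (n - j))"
proof -
  define I where "I = {fls_subdegree f..n - fls_subdegree g}"
  have zero: "f $$ j * g $$ (n - j) = 0" if "j \<notin> I" for j
    using that by (auto simp: I_def fls_eq0_below_subdegree)
  have "(f * g) $$ n = (\<Sum>j\<in>I. f $$ j * g $$ (n - j))"
    unfolding I_def by (rule fls_times_nth(2))
  also have "\<dots> = (\<Sum>j\<in>I \<union> J. f $$ j * g $$ (n - j))"
    by (rule sum.mono_neutral_left) (use assms zero in \<open>auto simp: I_def\<close>)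
  also have "\<dots> = (\<Sum>j\<in>J. f $$ j * g $$ (n - j))"
    by (rule sum.mono_neutral_right) (use assms zero in \<open>auto simp: I_def\<close>)
  finally show ?thesis .
qed

abbreviation fls_exp :: "'a::field_char_0 \<Rightarrow> 'a fls" where
  "fls_exp a \<equiv> fps_to_fls (fps_exp a)"

abbreviation fls_expm1 :: "'a::field_char_0 fls" where
  "fls_expm1 \<equiv> fls_exp 1 - 1"

lemma fls_exp_add: "fls_exp a * fls_exp b = fls_exp (a + b)"
  by (simp add: fps_exp_add_mult fls_times_fps_to_fls)

lemma fls_subdegree_exp: "fls_subdegree (fls_exp a) = 0"
  by (simp add: fls_subdegree_fls_to_fps subdegreeI)

lemma fls_subdegree_expm1: "fls_subdegree (fls_expm1 :: 'a::field_char_0 fls) = 1"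
proof -
  have "subdegree (fps_exp (1::'a) - 1) = 1"
    by (rule subdegreeI) auto
  then show ?thesis
    using fls_subdegree_fls_to_fps[of "fps_exp (1::'a) - 1"] by simp
qed

lemma fls_expm1_nonzero: "fls_expm1 \<noteq> 0"
  using fls_subdegree_expm1 by force

lemma fls_deriv_exp: "fls_deriv (fls_exp a) = fls_const a * fls_exp a"
  by (simp add: fls_deriv_fps_to_fls fls_times_fps_to_fls)

lemma fls_deriv_expm1: "fls_deriv fls_expm1 = fls_exp 1"
  by (simp add: fls_deriv_fps_to_fls)

lemma residue_exp_over_expm1_rec:
  "a * (fls_exp a * inverse fls_expm1 ^ N) $$ (-1)
     = of_nat N * (fls_exp (a + 1) * inverse fls_expm1 ^ Suc N) $$ (-1)"
proof -
  let ?F = "fls_exp a * inverse fls_expm1 ^ N"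
  have "fls_deriv ?F = fls_exp a * (of_nat N * inverse fls_expm1 ^ (N - 1)
      * (- fls_exp 1 * (inverse fls_expm1)\<^sup>2)) + fls_const a * fls_exp a * inverse fls_expm1 ^ N"
    by (simp add: fls_deriv_power fls_inverse_deriv fls_deriv_exp fls_deriv_expm1)
  also have "\<dots> = fls_const a * ?F - of_nat N * (fls_exp (a + 1) * inverse fls_expm1 ^ Suc N)"
    by (cases N) (simp_all add: fls_exp_add[symmetric] power2_eq_square algebra_simps)
  finally have "0 = (fls_const a * ?F - of_nat N * (fls_exp (a + 1) * inverse fls_expm1 ^ Suc N)) $$ (-1)"
    by (metis fls_deriv_residue)
  then show ?thesis
    by (simp del: power_Suc)
qed

lemma residue_exp_over_expm1_power:
  "(fls_exp a * inverse fls_expm1 ^ Suc N) $$ (-1) = (a - 1) gchoose N"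
proof (induction N arbitrary: a)
  case 0
  have "(fls_exp a * inverse fls_expm1) $$ (-1) = inverse fls_expm1 $$ (-1)"
    using fls_times_nth(2)[of "fls_exp a" "inverse fls_expm1" "-1"]
    by (simp add: fls_subdegree_exp fls_subdegree_expm1 fls_inverse_subdegree)
  also have "\<dots> = 1"
    using fls_inverse_subdegree_base[of fls_expm1] by (simp add: fls_subdegree_expm1)
  finally show ?case by simp
next
  case (Suc N)
  have "(a - 1) * ((a - 1 - 1) gchoose N)
      = of_nat (Suc N) * (fls_exp a * inverse fls_expm1 ^ Suc (Suc N)) $$ (-1)"
    using residue_exp_over_expm1_rec[of "a - 1" "Suc N"] Suc.IH[of "a - 1"] by simp
  moreover have "of_nat (Suc N) * ((a - 1) gchoose Suc N) = (a - 1) * ((a - 1 - 1) gchoose N)"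
    by (rule gbinomial_absorption)
  ultimately show ?case
    by (metis mult_cancel_left of_nat_eq_0_iff nat.distinct(1))
qed

lemma expfrac_eq: "expfrac b K = fls_exp b * fls_expm1 powi (- K)"
  unfolding expfrac_def by simp

lemma expfrac_nth_below: "n < - K \<Longrightarrow> expfrac b K $$ n = 0"
  unfolding expfrac_eq
  by (rule fls_times_nth_eq0) (simp add: fls_subdegree_exp fls_subdegree_expm1)

lemma expfrac_mult_residue:
  assumes "K + L \<ge> 1"
  shows "(expfrac b K * expfrac d L) $$ (-1) = (b + d - 1) gchoose nat (K + L - 1)"
proof -
  define N where "N = nat (K + L - 1)"
  have KL: "K + L = int (Suc N)"
    using assms by (simp add: N_def)
  have "expfrac b K * expfrac d L = (fls_exp b * fls_exp d) * (fls_expm1 powi (- K) * fls_expm1 powi (- L))"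
    unfolding expfrac_eq by (simp add: algebra_simps)
  also have "\<dots> = fls_exp (b + d) * fls_expm1 powi (- (K + L))"
    by (simp add: fls_exp_add power_int_add[symmetric] fls_expm1_nonzero)
  also have "fls_expm1 powi (- (K + L)) = inverse fls_expm1 ^ Suc N"
    unfolding KL by (simp only: power_int_minus power_int_of_nat power_inverse)
  finally show ?thesis
    by (simp only: residue_exp_over_expm1_power N_def)
qed

context module
begin

lemma span_UN_finite_subfamily:
  assumes "x \<in> span (\<Union>i\<in>I. A i)"
  obtains J where "J \<subseteq> I" "finite J" "x \<in> span (\<Union>i\<in>J. A i)"
proof -
  obtain t r where t: "finite t" "t \<subseteq> (\<Union>i\<in>I. A i)" and x: "x = (\<Sum>a\<in>t. r a *s a)"
    using assms unfolding span_explicit by blast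
  then obtain \<iota> where \<iota>: "\<And>a. a \<in> t \<Longrightarrow> \<iota> a \<in> I \<and> a \<in> A (\<iota> a)"
    by (metis UN_E subsetD)
  have "x \<in> span (\<Union>i\<in>\<iota> ` t. A i)"
    unfolding x using \<iota> by (intro span_sum span_scale span_base) auto
  then show ?thesis
    using \<iota> t(1) by (intro that[of "\<iota> ` t"]) auto
qed

lemma span_UN_subspaces:
  assumes "finite S" "\<And>i. i \<in> S \<Longrightarrow> subspace (A i)" "x \<in> span (\<Union>i\<in>S. A i)"
  shows "\<exists>f. (\<forall>i\<in>S. f i \<in> A i) \<and> x = (\<Sum>i\<in>S. f i)"
  using assms
proof (induction S arbitrary: x rule: finite_induct)
  case (insert i S)
  have "span (A i) = A i"
    using insert.prems(1) by simp
  then obtain a b where x: "x = a + b" "a \<in> A i" "b \<in> span (\<Union>j\<in>S. A j)"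
    using insert.prems(2) span_Un[of "A i"] by (auto simp del: span_eq_iff)
  then obtain f where "\<forall>j\<in>S. f j \<in> A j" "b = (\<Sum>j\<in>S. f j)"
    using insert.IH insert.prems(1) by blast
  then show ?case
    using insert.hyps x by (intro exI[of _ "f(i := a)"]) (auto intro!: sum.cong)
qed simp

end

context vector_space
begin

lemma eigenvector_in_span_eigenspaces_finite:
  assumes f: "Vector_Spaces.linear scale scale f"
    and "finite J" "c \<notin> ev ` J" "f x = c *s x" "x \<in> span (\<Union>j\<in>J. {v. f v = ev j *s v})"
  shows "x = 0"
  using assms(2-)
proof (induction J arbitrary: x rule: finite_induct)
  case (insert j J)
  interpret f: Vector_Spaces.linear scale scale f by (rule f)
  let ?E = "\<lambda>d. {v. f v = d *s v}"
  let ?U = "span (\<Union>i\<in>J. ?E (ev i))"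
  have "subspace (?E (ev j))"
    by (auto simp: subspace_def f.add f.scale scale_right_distrib scale_left_commute)
  then have "span (?E (ev j)) = ?E (ev j)"
    by simp
  then obtain a b where x: "x = a + b" "f a = ev j *s a" "b \<in> ?U"
    using insert.prems(3) span_Un[of "?E (ev j)"] by (auto simp del: span_eq_iff)
  have "f ` (\<Union>i\<in>J. ?E (ev i)) \<subseteq> (\<Union>i\<in>J. ?E (ev i))"
    by (auto simp: f.scale)
  then have "f b \<in> ?U"
    using x(3) f.span_image span_mono by blast
  then have "f b - ev j *s b \<in> ?U"
    using x(3) by (intro span_diff span_scale)
  moreover have "(c - ev j) *s x = f b - ev j *s b"
    using x insert.prems(2) by (simp add: f.add scale_left_diff_distrib scale_right_distrib algebra_simps)
  moreover have "f ((c - ev j) *s x) = c *s ((c - ev j) *s x)"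
    using insert.prems(2) by (simp add: f.scale scale_left_commute)
  ultimately have "(c - ev j) *s x = 0"
    using insert.prems(1) by (intro insert.IH) auto
  then show ?case
    using insert.prems(1) by simp
qed simp

lemma eigenvector_in_span_eigenspaces:
  assumes "Vector_Spaces.linear scale scale f"
    and "c \<notin> ev ` J" "f x = c *s x" "x \<in> span (\<Union>j\<in>J. {v. f v = ev j *s v})"
  shows "x = 0"
proof -
  obtain J' where "J' \<subseteq> J" "finite J'" "x \<in> span (\<Union>j\<in>J'. {v. f v = ev j *s v})"
    using assms(4) by (rule span_UN_finite_subfamily)
  then show ?thesis
    using assms(1-3) eigenvector_in_span_eigenspaces_finite by blast
qed

end

locale vertex_operator_algebra =
  fixes sc :: "complex \<Rightarrow> 'v::ab_group_add \<Rightarrow> 'v" and Y :: "'v \<Rightarrow> int \<Rightarrow> 'v \<Rightarrow> 'v"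
    and vac om :: 'v and c :: complex
  assumes VOA: "VOA sc Y vac om c"
begin

lemma vertex_algebra: "vertex_algebra sc Y vac"
  using VOA unfolding VOA_def by blast

lemma linear_Y: "Vector_Spaces.linear sc sc (Y u n)" "Vector_Spaces.linear sc sc (\<lambda>u. Y u n v)"
  using vertex_algebra unfolding vertex_algebra_def by blast+

sublocale vector_space sc
  using vertex_algebra unfolding vertex_algebra_def by blast

sublocale Y_right: Vector_Spaces.linear sc sc "Y u n" for u n
  by (rule linear_Y(1))

sublocale Y_left: Vector_Spaces.linear sc sc "\<lambda>u. Y u n v" for n v
  by (rule linear_Y(2))

lemma Y_truncated: "\<exists>N. \<forall>n\<ge>N. Y u n v = 0"
  using vertex_algebra unfolding vertex_algebra_def by blast

lemma Y_vacuum: "Y u (-1) vac = u" "n \<ge> 0 \<Longrightarrow> Y u n vac = 0"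
  using vertex_algebra unfolding vertex_algebra_def by blast+

lemma Lop_minus_one: "Lop Y om (-1) u = Y u (-2) vac"
proof -
  have "Y (Lop Y om (-1) u) (-1) vac = sc (- of_int (-1)) (Y u (-1 - 1) vac)"
    using VOA unfolding VOA_def by blast
  then show ?thesis
    by (simp add: Y_vacuum)
qed

abbreviation W :: "int \<Rightarrow> 'v set" where
  "W k \<equiv> wtspace sc Y om k"

lemma subspace_wtspace: "subspace (W k)"
  by (auto simp: subspace_def wtspace_def Lop_def Y_right.add Y_right.scale
      scale_right_distrib scale_left_commute)

lemma wtspace_in_span_others_eq_0:
  assumes "x \<in> W k" "x \<in> span (\<Union>j\<in>-{k}. W j)"
  shows "x = 0"
proof (rule eigenvector_in_span_eigenspaces)
  show "Vector_Spaces.linear sc sc (Lop Y om 0)"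
    unfolding Lop_def by simp (rule linear_Y(1))
  show "(of_int k :: complex) \<notin> of_int ` (-{k})"
    by auto
qed (use assms in \<open>simp_all add: wtspace_def\<close>)

lemma wtspace_decomposition: "\<exists>S f. finite S \<and> (\<forall>k\<in>S. f k \<in> W k) \<and> v = (\<Sum>k\<in>S. f k)"
proof -
  obtain S where "finite S" "v \<in> span (\<Union>k\<in>S. W k)"
    using VOA unfolding VOA_def by blast
  then show ?thesis
    using span_UN_subspaces[of S W v] subspace_wtspace by blast
qed

lemma wtproj_eqI:
  assumes "w \<in> W k" "v - w \<in> span (\<Union>j\<in>-{k}. W j)"
  shows "wtproj sc Y om k v = w"
  unfolding wtproj_def
proof (rule the_equality)
  fix w' assume w': "w' \<in> W k \<and> v - w' \<in> span (\<Union>j\<in>-{k}. W j)"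
  have "w' - w \<in> W k"
    using w' assms(1) subspace_wtspace subspace_diff by blast
  moreover have "w' - w \<in> span (\<Union>j\<in>-{k}. W j)"
    using span_diff[OF assms(2) conjunct2[OF w']] by (simp add: algebra_simps)
  ultimately show "w' = w"
    using wtspace_in_span_others_eq_0 by force
qed (use assms in simp)

lemma wtproj_sum:
  assumes "finite S" "\<And>j. j \<in> S \<Longrightarrow> f j \<in> W j"
  shows "wtproj sc Y om k (\<Sum>j\<in>S. f j) = (if k \<in> S then f k else 0)"
proof (rule wtproj_eqI)
  have "(\<Sum>j\<in>S. f j) - (if k \<in> S then f k else 0) = (\<Sum>j\<in>S - {k}. f j)"
    using assms(1) by (simp add: sum_diff1)
  also have "\<dots> \<in> span (\<Union>j\<in>-{k}. W j)"
    using assms(2) by (intro span_sum span_base) auto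
  finally show "(\<Sum>j\<in>S. f j) - (if k \<in> S then f k else 0) \<in> span (\<Union>j\<in>-{k}. W j)" .
qed (use assms(2) subspace_wtspace subspace_0 in auto)

lemma wtproj_in_wtspace: "wtproj sc Y om k v \<in> W k"
proof -
  obtain S f where "finite S" "\<forall>k\<in>S. f k \<in> W k" "v = (\<Sum>k\<in>S. f k)"
    using wtspace_decomposition by blast
  then show ?thesis
    using wtproj_sum subspace_wtspace subspace_0 by auto
qed

lemma finite_wts: "finite (wts sc Y om v)"
  and sum_wtproj: "(\<Sum>k\<in>wts sc Y om v. wtproj sc Y om k v) = v"
proof -
  obtain S f where S: "finite S" "\<forall>k\<in>S. f k \<in> W k" and v: "v = (\<Sum>k\<in>S. f k)"
    using wtspace_decomposition by blast
  then have proj: "wtproj sc Y om k v = (if k \<in> S then f k else 0)" for k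
    using wtproj_sum by simp
  then have sub: "wts sc Y om v \<subseteq> S"
    unfolding wts_def by auto
  then show "finite (wts sc Y om v)"
    using S(1) finite_subset by blast
  have "(\<Sum>k\<in>wts sc Y om v. wtproj sc Y om k v) = (\<Sum>k\<in>S. wtproj sc Y om k v)"
    by (rule sum.mono_neutral_left[OF S(1) sub]) (auto simp: wts_def)
  also have "\<dots> = v"
    using v proj by simp
  finally show "(\<Sum>k\<in>wts sc Y om v. wtproj sc Y om k v) = v" .
qed

lemma wtproj_wtspace:
  assumes "x \<in> W k"
  shows "wtproj sc Y om j x = (if j = k then x else 0)"
  using wtproj_sum[of "{k}" "\<lambda>_. x" j] assms by simp

lemma wtproj_commute:
  assumes "Vector_Spaces.linear sc sc \<phi>" "\<And>k x. x \<in> W k \<Longrightarrow> \<phi> x \<in> W k"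
  shows "wtproj sc Y om k (\<phi> v) = \<phi> (wtproj sc Y om k v)"
proof -
  interpret \<phi>: Vector_Spaces.linear sc sc \<phi> by fact
  obtain S f where S: "finite S" "\<forall>k\<in>S. f k \<in> W k" and v: "v = (\<Sum>k\<in>S. f k)"
    using wtspace_decomposition by blast
  have "wtproj sc Y om k (\<phi> v) = wtproj sc Y om k (\<Sum>j\<in>S. \<phi> (f j))"
    unfolding v \<phi>.sum ..
  also have "\<dots> = (if k \<in> S then \<phi> (f k) else 0)"
    using S assms(2) by (simp add: wtproj_sum)
  also have "\<dots> = \<phi> (wtproj sc Y om k v)"
    unfolding v using S by (simp add: wtproj_sum)
  finally show ?thesis .
qed

section \<open>The vertex operator of \<open>exp(V, \<omega>)\<close>\<close>

definition exp_mode :: "int \<Rightarrow> 'v \<Rightarrow> int \<Rightarrow> 'v \<Rightarrow> 'v" where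
  "exp_mode k x n v = fsum (\<lambda>j. sc (expfrac (of_int k) (j + 1) $$ (- n - 1)) (Y x j v))"

lemma expY_eq_sum_exp_mode:
  "expY sc Y om u n v = (\<Sum>k\<in>wts sc Y om u. exp_mode k (wtproj sc Y om k u) n v)"
  unfolding expY_def exp_mode_def ..

lemma exp_mode_eq_sum:
  assumes "\<And>i. i \<ge> N \<Longrightarrow> Y x i v = 0" "{n..<N} \<subseteq> J" "finite J"
  shows "exp_mode k x n v = (\<Sum>i\<in>J. sc (expfrac (of_int k) (i + 1) $$ (- n - 1)) (Y x i v))"
  unfolding exp_mode_def
proof (rule fsum_eq_sum[OF assms(3)])
  fix i assume "i \<notin> J"
  then have "i < n \<or> i \<ge> N"
    using assms(2) by (meson atLeastLessThan_iff not_le subsetD)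
  then show "sc (expfrac (of_int k) (i + 1) $$ (- n - 1)) (Y x i v) = 0"
    using assms(1) by (auto simp: expfrac_nth_below)
qed

lemma exp_mode_eq_0: "(\<And>i. i \<ge> N \<Longrightarrow> Y x i v = 0) \<Longrightarrow> n \<ge> N \<Longrightarrow> exp_mode k x n v = 0"
  using exp_mode_eq_sum[of N x v n "{}"] by simp

lemma expY_eq_sum_exp_mode_superset:
  assumes "finite S" "wts sc Y om u \<subseteq> S"
  shows "expY sc Y om u n v = (\<Sum>k\<in>S. exp_mode k (wtproj sc Y om k u) n v)"
  unfolding expY_eq_sum_exp_mode
  by (rule sum.mono_neutral_left) (use assms in \<open>auto simp: wts_def exp_mode_def fsum_def\<close>)

lemma expY_wtspace:
  assumes "x \<in> W k"
  shows "expY sc Y om x n v = exp_mode k x n v"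
proof -
  have "wts sc Y om x \<subseteq> {k}"
    using assms by (auto simp: wts_def wtproj_wtspace)
  then show ?thesis
    using assms by (simp add: expY_eq_sum_exp_mode_superset[of "{k}"] wtproj_wtspace)
qed

lemma resx_expY_wtspace:
  assumes x: "x \<in> W k" and N: "\<And>i. i \<ge> N \<Longrightarrow> Y x i v = 0" and F: "\<And>j. j < - K \<Longrightarrow> F $$ j = 0"
  shows "resx sc (expY sc Y om) F x v
    = (\<Sum>i\<in>{-K..<N}. sc ((F * expfrac (of_int k) (i + 1)) $$ (-1)) (Y x i v))"
proof -
  define J where "J = {-K..<N}"
  let ?G = "\<lambda>i. expfrac (of_int k) (i + 1)"
  have outside: "j < - K \<or> j \<ge> N" if "j \<notin> J" for j
    using that by (auto simp: J_def)
  have "resx sc (expY sc Y om) F x v = (\<Sum>j\<in>J. sc (F $$ j) (expY sc Y om x j v))"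
    unfolding resx_def
    by (rule fsum_eq_sum) (auto simp: J_def F expY_wtspace[OF x] exp_mode_eq_0[OF N] dest: outside)
  also have "\<dots> = (\<Sum>j\<in>J. \<Sum>i\<in>J. sc (F $$ j * ?G i $$ (-1 - j)) (Y x i v))"
  proof (intro sum.cong refl)
    fix j assume "j \<in> J"
    then have "exp_mode k x j v = (\<Sum>i\<in>J. sc (?G i $$ (- j - 1)) (Y x i v))"
      using N by (intro exp_mode_eq_sum) (auto simp: J_def)
    moreover have "- j - 1 = -1 - j"
      by simp
    ultimately show "sc (F $$ j) (expY sc Y om x j v) = (\<Sum>i\<in>J. sc (F $$ j * ?G i $$ (-1 - j)) (Y x i v))"
      by (simp add: expY_wtspace[OF x] scale_sum_right)
  qed
  also have "\<dots> = (\<Sum>i\<in>J. sc (\<Sum>j\<in>J. F $$ j * ?G i $$ (-1 - j)) (Y x i v))"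
    by (subst sum.swap) (simp add: scale_sum_left)
  also have "\<dots> = (\<Sum>i\<in>J. sc ((F * ?G i) $$ (-1)) (Y x i v))"
  proof (intro sum.cong refl arg_cong2[where f = sc] fls_times_nth_sum[symmetric])
    fix i j assume "i \<in> J" "j \<notin> J"
    then show "F $$ j * ?G i $$ (-1 - j) = 0"
      using outside by (auto simp: F J_def expfrac_nth_below)
  qed (simp add: J_def)
  finally show ?thesis
    unfolding J_def .
qed

text \<open>The change of variables \<open>z = e\<^sup>w - 1\<close>: for \<open>x\<close> of weight \<open>k\<close>,
  \<open>Res\<^sub>w F(w) Y[x, w] = Res\<^sub>z F(log(1 + z)) (1 + z)^(k - 1) Y(x, z)\<close>.\<close>
lemma resx_expY_expfrac:
  assumes "x \<in> W k"
  shows "resx sc (expY sc Y om) (expfrac b K) x v = resz sc Y (of_int k - 1 + b) K x v"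
proof -
  obtain N where N: "\<And>i. i \<ge> N \<Longrightarrow> Y x i v = 0"
    using Y_truncated by blast
  let ?\<alpha> = "of_int k - 1 + b"
  have "resx sc (expY sc Y om) (expfrac b K) x v
      = (\<Sum>i\<in>{-K..<N}. sc ((expfrac b K * expfrac (of_int k) (i + 1)) $$ (-1)) (Y x i v))"
    using N by (intro resx_expY_wtspace[OF assms]) (auto simp: expfrac_nth_below)
  also have "\<dots> = (\<Sum>i\<in>{-K..<N}. sc (?\<alpha> gchoose nat (K + i)) (Y x i v))"
    by (intro sum.cong refl) (simp add: expfrac_mult_residue algebra_simps)
  also have "\<dots> = (\<Sum>j<nat (N + K). sc (?\<alpha> gchoose j) (Y x (int j - K) v))"
    by (rule sum.reindex_bij_witness[where i = "\<lambda>j. int j - K" and j = "\<lambda>i. nat (i + K)"])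
      (auto simp: add.commute)
  also have "\<dots> = resz sc Y ?\<alpha> K x v"
    unfolding resz_def by (rule fsum_eq_sum[symmetric]) (auto intro: N)
  finally show ?thesis .
qed

lemma resx_expY_sum_wtproj:
  assumes "finite S" "wts sc Y om y \<subseteq> S"
  shows "resx sc (expY sc Y om) F y v = (\<Sum>k\<in>S. resx sc (expY sc Y om) F (wtproj sc Y om k y) v)"
proof -
  let ?h = "\<lambda>k j. sc (F $$ j) (exp_mode k (wtproj sc Y om k y) j v)"
  have fin: "finite {j. ?h k j \<noteq> 0}" for k
  proof -
    obtain N where N: "\<And>i. i \<ge> N \<Longrightarrow> Y (wtproj sc Y om k y) i v = 0"
      using Y_truncated by blast
    have zero: "?h k j = 0" if "j < fls_subdegree F \<or> j \<ge> N" for j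
      using that by (auto simp: exp_mode_eq_0[OF N] fls_eq0_below_subdegree)
    have "{j. ?h k j \<noteq> 0} \<subseteq> {fls_subdegree F..<N}"
    proof
      fix j assume "j \<in> {j. ?h k j \<noteq> 0}"
      then show "j \<in> {fls_subdegree F..<N}"
        using zero[of j] by force
    qed
    then show ?thesis
      by (rule finite_subset) simp
  qed
  have "fsum (\<lambda>j. \<Sum>k\<in>S. ?h k j) = (\<Sum>k\<in>S. fsum (?h k))"
    by (rule fsum_sum_swap[OF assms(1) fin])
  then show ?thesis
    unfolding resx_def expY_eq_sum_exp_mode_superset[OF assms]
    by (simp add: scale_sum_right expY_wtspace[OF wtproj_in_wtspace])
qed

lemma bulletH_expY_wtspace:
  assumes "x \<in> W k"
  shows "bulletH sc (expY sc Y om) T r m p n x v = vstarH sc Y T k r m p n x v"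
proof -
  have "(of_int (k - 1 + int (m div T) + dlt T (m mod T) r) + of_nat r / of_nat T :: complex)
      = of_int k - 1 + (of_int (int (m div T) + dlt T (m mod T) r) + of_nat r / of_nat T)"
    by simp
  then show ?thesis
    unfolding bulletH_def vstarH_def Let_def by (simp only: resx_expY_expfrac[OF assms])
qed

lemma diamondH_expY_wtspace:
  assumes "x \<in> W k"
  shows "diamondH sc (expY sc Y om) T r m n x v = vcircH sc Y T k r m n x v"
proof -
  have "(of_int (k - 1 + int (m div T) + dlt T (m mod T) r) + of_nat r / of_nat T :: complex)
      = of_int k - 1 + (of_int (dlt T (m mod T) r + int (m div T)) + of_nat r / of_nat T)"
    by simp
  then show ?thesis
    unfolding diamondH_def vcircH_def by (simp only: resx_expY_expfrac[OF assms])
qed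

lemma bulletH_expY:
  assumes "finite S" "wts sc Y om y \<subseteq> S"
  shows "bulletH sc (expY sc Y om) T r m p n y v
    = (\<Sum>k\<in>S. vstarH sc Y T k r m p n (wtproj sc Y om k y) v)"
proof -
  have "bulletH sc (expY sc Y om) T r m p n y v
      = (\<Sum>k\<in>S. bulletH sc (expY sc Y om) T r m p n (wtproj sc Y om k y) v)"
    unfolding bulletH_def Let_def resx_expY_sum_wtproj[OF assms]
    by (simp add: scale_sum_right sum.swap[of _ S])
  then show ?thesis
    by (simp add: bulletH_expY_wtspace[OF wtproj_in_wtspace])
qed

lemma diamondH_expY:
  assumes "finite S" "wts sc Y om y \<subseteq> S"
  shows "diamondH sc (expY sc Y om) T r m n y v
    = (\<Sum>k\<in>S. vcircH sc Y T k r m n (wtproj sc Y om k y) v)"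
proof -
  have "diamondH sc (expY sc Y om) T r m n y v
      = (\<Sum>k\<in>S. diamondH sc (expY sc Y om) T r m n (wtproj sc Y om k y) v)"
    unfolding diamondH_def by (rule resx_expY_sum_wtproj[OF assms])
  then show ?thesis
    by (simp add: diamondH_expY_wtspace[OF wtproj_in_wtspace])
qed

lemma exp_mode_vacuum:
  assumes "x \<in> W k"
  shows "exp_mode k x (-2) vac = Y x (-2) vac + sc (of_int k) x"
proof -
  have "expfrac (of_int k) (-1) = fls_exp (of_int k + 1) - fls_exp (of_int k)"
    by (simp add: expfrac_eq algebra_simps fls_exp_add)
  then have "expfrac (of_int k) (-1) $$ 1 = 1"
    by simp
  moreover have "expfrac (of_int k) 0 $$ 1 = of_int k"
    by (simp add: expfrac_eq)
  moreover have "exp_mode k x (-2) vac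
      = (\<Sum>i\<in>{-2, -1}. sc (expfrac (of_int k) (i + 1) $$ (- (-2) - 1)) (Y x i vac))"
    by (rule exp_mode_eq_sum[where N = 0]) (auto simp: Y_vacuum)
  ultimately show ?thesis
    by (simp add: Y_vacuum add.commute)
qed

lemma expY_minus_two_vacuum: "expY sc Y om u (-2) vac = Lop Y om (-1) u + Lop Y om 0 u"
proof -
  let ?p = "\<lambda>k. wtproj sc Y om k u"
  have "expY sc Y om u (-2) vac = (\<Sum>k\<in>wts sc Y om u. Y (?p k) (-2) vac + Lop Y om 0 (?p k))"
    unfolding expY_eq_sum_exp_mode
    using wtproj_in_wtspace by (simp add: exp_mode_vacuum wtspace_def)
  also have "\<dots> = (\<Sum>k\<in>wts sc Y om u. Y (?p k) (-2) vac) + Lop Y om 0 (\<Sum>k\<in>wts sc Y om u. ?p k)"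
    by (simp add: sum.distrib Lop_def Y_right.sum)
  also have "\<dots> = Y u (-2) vac + Lop Y om 0 u"
    by (simp add: sum_wtproj flip: Y_left.sum)
  finally show ?thesis
    by (simp add: Lop_minus_one)
qed

end

section \<open>Automorphisms\<close>

locale voa_automorphism = vertex_operator_algebra +
  fixes g
  assumes automorphism: "voa_aut sc Y vac om g"
begin

lemma linear_g: "Vector_Spaces.linear sc sc g"
  and inj_g: "inj g"
  and g_Y: "g (Y u n v) = Y (g u) n (g v)"
  and g_om: "g om = om"
  using automorphism unfolding voa_aut_def va_aut_def bij_def by blast+

sublocale g: Vector_Spaces.linear sc sc g
  by (rule linear_g)

sublocale g_pow: Vector_Spaces.linear sc sc "g ^^ j" for j
proof (induction j)
  case (Suc j)
  then show ?case
    using Vector_Spaces.linear_compose[OF Suc linear_g] by (simp add: comp_def)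
qed (simp add: module_hom_ident)

lemma g_wtspace: "x \<in> W k \<Longrightarrow> g x \<in> W k"
  using g_Y[of om 1 x] g_om by (simp add: wtspace_def Lop_def g.scale)

lemma g_pow_wtspace: "x \<in> W k \<Longrightarrow> (g ^^ j) x \<in> W k"
  by (induction j) (simp_all add: g_wtspace)

lemma linear_gproj: "Vector_Spaces.linear sc sc (gproj sc g T r)"
  unfolding Vector_Spaces.linear_iff gproj_def
  by (simp add: vector_space_axioms g_pow.add g_pow.scale scale_right_distrib sum.distrib
      scale_sum_right scale_left_commute mult_ac)

sublocale gproj: Vector_Spaces.linear sc sc "gproj sc g T r" for T r
  by (rule linear_gproj)

lemma gproj_wtspace: "x \<in> W k \<Longrightarrow> gproj sc g T r x \<in> W k"
  unfolding gproj_def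
  by (intro subspace_scale[OF subspace_wtspace] subspace_sum[OF subspace_wtspace] g_pow_wtspace)

lemma wtproj_gproj: "wtproj sc Y om k (gproj sc g T r u) = gproj sc g T r (wtproj sc Y om k u)"
  by (rule wtproj_commute[OF linear_gproj gproj_wtspace])

lemma wts_gproj: "wts sc Y om (gproj sc g T r u) \<subseteq> wts sc Y om u"
  unfolding wts_def wtproj_gproj using gproj.zero by auto

lemma bullet_expY_eq_vstar: "bullet sc (expY sc Y om) g T m p n u v = vstar sc Y om g T m p n u v"
  unfolding bullet_def vstar_def
  by (simp add: bulletH_expY[OF finite_wts wts_gproj] wtproj_gproj sum.swap[of _ "wts sc Y om u"])

lemma diamond_expY_eq_vcirc: "diamond sc (expY sc Y om) g T m n u v = vcirc sc Y om g T m n u v"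
  unfolding diamond_def vcirc_def
  by (simp add: diamondH_expY[OF finite_wts wts_gproj] wtproj_gproj sum.swap[of _ "wts sc Y om u"])

lemma g_expY: "g (expY sc Y om u n v) = expY sc Y om (g u) n (g v)"
proof -
  have wtproj_g: "wtproj sc Y om k (g u) = g (wtproj sc Y om k u)" for k
    using wtproj_commute[OF linear_g g_wtspace] .
  then have "wts sc Y om (g u) = wts sc Y om u"
    using inj_g g.inj_iff_eq_0 g.zero by (auto simp: wts_def)
  moreover have "g (exp_mode k x n v) = exp_mode k (g x) n (g v)" for k x
    unfolding exp_mode_def by (simp add: linear_fsum[OF linear_g inj_g] g_Y g.scale)
  ultimately show ?thesis
    unfolding expY_eq_sum_exp_mode by (simp add: g.sum wtproj_g)
qed

lemma va_aut_expY: "va_aut sc (expY sc Y om) vac g"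
  using automorphism g_expY unfolding voa_aut_def va_aut_def by blast

end

theorem lemma8p7:
  fixes sc :: "complex \<Rightarrow> 'v::ab_group_add \<Rightarrow> 'v"
    and Y :: "'v \<Rightarrow> int \<Rightarrow> 'v \<Rightarrow> 'v"
    and vac om :: 'v and c :: complex and g :: "'v \<Rightarrow> 'v" and T :: nat
  assumes "VOA sc Y vac om c"
    and "voa_aut sc Y vac om g"
    and "finite_order g T"
  shows "va_aut sc (expY sc Y om) vac g
    \<and> (\<forall>n. O1V sc Y om g T n n = O1A sc (expY sc Y om) vac g T n n
         \<and> (\<forall>u v. vstar sc Y om g T n n n u v - bullet sc (expY sc Y om) g T n n n u v
                   \<in> O1V sc Y om g T n n))
    \<and> (\<forall>n m. Ofull sc (vstar sc Y om g T) (O1V sc Y om g T) n m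
             = Ofull sc (bullet sc (expY sc Y om) g T) (O1A sc (expY sc Y om) vac g T) n m
         \<and> (\<forall>u v. vstar sc Y om g T m n n u v - bullet sc (expY sc Y om) g T m n n u v
                   \<in> Ofull sc (vstar sc Y om g T) (O1V sc Y om g T) n m)
         \<and> (\<forall>u v. vstar sc Y om g T m m n u v - bullet sc (expY sc Y om) g T m m n u v
                   \<in> Ofull sc (vstar sc Y om g T) (O1V sc Y om g T) n m))"
proof -
  interpret voa_automorphism sc Y vac om c g
    by unfold_locales (fact assms(1), fact assms(2))
  have star: "vstar sc Y om g T = bullet sc (expY sc Y om) g T"
    by (intro ext) (simp add: bullet_expY_eq_vstar)
  have O1: "O1V sc Y om g T = O1A sc (expY sc Y om) vac g T"
    by (intro ext) (simp add: O1V_def O1A_def diamond_expY_eq_vcirc expY_minus_two_vacuum)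
  show ?thesis
    using va_aut_expY by (simp add: star O1 O1A_def Ofull_def span_zero)
qed

end
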